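(* Let $(M,g)$ be a four-dimensional spacetime with signature $(+,-,-,-)$, let $X_{abcd}$ be an arbitrary $(2,2)$ double form at a point ($X_{abcd}=-X_{bacd}=-X_{abdc}$), and let $t^q$ be a vector at that point with $t_mt^m\neq0$. Define the left, right and double duals $\overleftarrow{\star}X_{abcd}=\tfrac12\varepsilon_{ab}{}^{pq}X_{pqcd}$, $\overrightarrow{\star}X_{abcd}=\tfrac12\varepsilon_{cd}{}^{pq}X_{abpq}$, $\overleftrightarrow{\star}X_{abcd}=\tfrac14\varepsilon_{ab}{}^{pq}\varepsilon_{cd}{}^{rs}X_{pqrs}$, and the tensors $$\mathfrak A_{ac}=X_{abcd}t^bt^d,\quad \mathfrak B_{ac}=-\overrightarrow{\star}X_{abcd}t^bt^d,\quad \mathfrak C_{ac}=-\overleftarrow{\star}X_{abcd}t^bt^d,\quad \mathfrak D_{ac}=\overleftrightarrow{\star}X_{abcd}t^bt^d.$$ Then $$X_{abcd}=\frac{\big\{g_{abpq}\big(g_{cdrs}\mathfrak A^{pr}+\varepsilon_{cdrs}\mathfrak B^{pr}\big)+\varepsilon_{abpq}\big(g_{cdrs}\mathfrak C^{pr}+\varepsilon_{cdrs}\mathfrak D^{pr}\big)\big\}t^qt^s}{(t_mt^m)^2},$$ where $g_{abcd}=g_{ac}g_{bd}-g_{ad}g_{bc}$.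
   Context: The Levi-Civita tensors are $\varepsilon_{abcd}=\sqrt{-\det g}\,[abcd]$, $\varepsilon^{abcd}=-[abcd]/\sqrt{-\det g}$ with $[0123]=+1$, so that $\varepsilon^{a_1\dots a_4}\varepsilon_{b_1\dots b_4}=-\delta^{a_1\dots a_4}_{b_1\dots b_4}$ (generalized Kronecker delta). Indices are raised and lowered with $g$. *)

theory Defs
  imports Complex_Main
begin

text \<open>Tensors at a point of a 4-dimensional spacetime, in components with respect to
  a coordinate basis; indices are natural numbers in 0..3 (i.e. below 4).\<close>

definition eta :: "nat \<Rightarrow> nat \<Rightarrow> real" where
  "eta i j = (if i = j then (if i = 0 then 1 else -1) else 0)"

definition lorentzian :: "(nat \<Rightarrow> nat \<Rightarrow> real) \<Rightarrow> bool" where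
  "lorentzian g \<longleftrightarrow> (\<forall>a<4. \<forall>b<4. g a b = g b a) \<and>
     (\<exists>E :: nat \<Rightarrow> nat \<Rightarrow> real. \<forall>i<4. \<forall>j<4.
        (\<Sum>a<4. \<Sum>b<4. E i a * E j b * g a b) = eta i j)"

text \<open>Levi-Civita symbol [abcd] with [0123] = 1.\<close>
definition lc_sym :: "nat \<Rightarrow> nat \<Rightarrow> nat \<Rightarrow> nat \<Rightarrow> real" where
  "lc_sym a b c d = real_of_int (sgn ((int b - int a) * (int c - int a) * (int d - int a)
      * (int c - int b) * (int d - int b) * (int d - int c)))"

definition mdet :: "(nat \<Rightarrow> nat \<Rightarrow> real) \<Rightarrow> real" where
  "mdet g = (\<Sum>a<4. \<Sum>b<4. \<Sum>c<4. \<Sum>d<4.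
      lc_sym a b c d * g 0 a * g 1 b * g 2 c * g 3 d)"

definition ginv :: "(nat \<Rightarrow> nat \<Rightarrow> real) \<Rightarrow> nat \<Rightarrow> nat \<Rightarrow> real" where
  "ginv g = (THE h. (\<forall>a<4. \<forall>c<4. (\<Sum>b<4. g a b * h b c) = (if a = c then 1 else 0))
                 \<and> (\<forall>a b. \<not> (a < 4 \<and> b < 4) \<longrightarrow> h a b = 0))"

definition eps_low :: "(nat \<Rightarrow> nat \<Rightarrow> real) \<Rightarrow> nat \<Rightarrow> nat \<Rightarrow> nat \<Rightarrow> nat \<Rightarrow> real" where
  "eps_low g a b c d = sqrt (- mdet g) * lc_sym a b c d"

definition eps_mix :: "(nat \<Rightarrow> nat \<Rightarrow> real) \<Rightarrow> nat \<Rightarrow> nat \<Rightarrow> nat \<Rightarrow> nat \<Rightarrow> real" where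
  "eps_mix g a b p q = (\<Sum>r<4. \<Sum>s<4. eps_low g a b r s * ginv g r p * ginv g s q)"

definition g4 :: "(nat \<Rightarrow> nat \<Rightarrow> real) \<Rightarrow> nat \<Rightarrow> nat \<Rightarrow> nat \<Rightarrow> nat \<Rightarrow> real" where
  "g4 g a b c d = g a c * g b d - g a d * g b c"

definition left_dual where
  "left_dual g X a b c d = (1/2) * (\<Sum>p<4. \<Sum>q<4. eps_mix g a b p q * X p q c d)"
definition right_dual where
  "right_dual g X a b c d = (1/2) * (\<Sum>p<4. \<Sum>q<4. eps_mix g c d p q * X a b p q)"
definition double_dual where
  "double_dual g X a b c d = (1/4) * (\<Sum>p<4. \<Sum>q<4. \<Sum>r<4. \<Sum>s<4.
      eps_mix g a b p q * eps_mix g c d r s * X p q r s)"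

definition contr :: "(nat \<Rightarrow> nat \<Rightarrow> nat \<Rightarrow> nat \<Rightarrow> real) \<Rightarrow> (nat \<Rightarrow> real) \<Rightarrow> nat \<Rightarrow> nat \<Rightarrow> real" where
  "contr Y t a c = (\<Sum>b<4. \<Sum>d<4. Y a b c d * t b * t d)"

definition frakA where "frakA g X t a c = contr X t a c"
definition frakB where "frakB g X t a c = - contr (right_dual g X) t a c"
definition frakC where "frakC g X t a c = - contr (left_dual g X) t a c"
definition frakD where "frakD g X t a c = contr (double_dual g X) t a c"

definition raise2 :: "(nat \<Rightarrow> nat \<Rightarrow> real) \<Rightarrow> (nat \<Rightarrow> nat \<Rightarrow> real) \<Rightarrow> nat \<Rightarrow> nat \<Rightarrow> real" where
  "raise2 g T p r = (\<Sum>a<4. \<Sum>c<4. ginv g p a * ginv g r c * T a c)"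

definition sqnorm :: "(nat \<Rightarrow> nat \<Rightarrow> real) \<Rightarrow> (nat \<Rightarrow> real) \<Rightarrow> real" where
  "sqnorm g t = (\<Sum>m<4. \<Sum>n<4. g m n * t m * t n)"

end

theory Submission
  imports Defs "HOL-Analysis.Cartesian_Space"
begin

(* For a 2-form F and a vector t with t_m t^m \<noteq> 0, F is determined by its electric part
   E_a = F_ab t^b and its magnetic part B_a = - (dual F)_ab t^b relative to t:
     (t_m t^m) F_ab = g_abpq E^p t^q + eps_abpq B^p t^q.
   The g-term equals E_a t_b - t_a E_b.  In the eps-term, eps^abcd = - [abcd] / sqrt (- det g)
   (det g < 0 because g is Lorentzian) turns eps_pabq eps^pwuv into minus the generalized
   Kronecker delta, which gives t_a E_b - t_b E_a + (t_m t^m) F_ab.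
   Decomposing X in its first index pair, and then each of the resulting E and B in the
   second pair, produces exactly the contractions A, B, C, D of X and its duals. *)

definition kron :: "nat \<Rightarrow> nat \<Rightarrow> real" where
  "kron i j = (if i = j then 1 else 0)"

lemma kron_commute: "kron i j = kron j i"
  by (simp add: kron_def)

lemma sum_kron_left: "c < 4 \<Longrightarrow> (\<Sum>v<4. kron c v * f v) = f c"
  by (simp add: kron_def if_distrib[of "\<lambda>x. x * f _"] sum.delta' cong: if_cong)

lemma sum_kron_right: "c < 4 \<Longrightarrow> (\<Sum>v<4. f v * kron v c) = f c"
  by (simp add: kron_def if_distrib[of "\<lambda>x. f _ * x"] sum.delta cong: if_cong)

lemma less_4_cases:
  assumes "i < (4::nat)"
  obtains "i = 0" | "i = 1" | "i = 2" | "i = 3"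
  using assms by linarith

lemma sum_lessThan_4: "(\<Sum>p<4. f p) = f 0 + f 1 + f 2 + f 3" for f :: "nat \<Rightarrow> 'a::comm_monoid_add"
  by (simp add: eval_nat_numeral add.assoc)

lemma sum_pull_out_2: "(\<Sum>a\<in>A. \<Sum>b\<in>B. \<Sum>i\<in>I. F a b i) = (\<Sum>i\<in>I. \<Sum>a\<in>A. \<Sum>b\<in>B. F a b i)"
proof -
  have "(\<Sum>a\<in>A. \<Sum>b\<in>B. \<Sum>i\<in>I. F a b i) = (\<Sum>a\<in>A. \<Sum>i\<in>I. \<Sum>b\<in>B. F a b i)"
    by (rule sum.cong[OF refl], rule sum.swap)
  then show ?thesis by (simp only: sum.swap[of _ A])
qed

lemma sum_pull_out_3:
  "(\<Sum>a\<in>A. \<Sum>b\<in>B. \<Sum>c\<in>C. \<Sum>i\<in>I. F a b c i) = (\<Sum>i\<in>I. \<Sum>a\<in>A. \<Sum>b\<in>B. \<Sum>c\<in>C. F a b c i)"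
proof -
  have "(\<Sum>a\<in>A. \<Sum>b\<in>B. \<Sum>c\<in>C. \<Sum>i\<in>I. F a b c i) = (\<Sum>a\<in>A. \<Sum>i\<in>I. \<Sum>b\<in>B. \<Sum>c\<in>C. F a b c i)"
    by (rule sum.cong[OF refl], rule sum_pull_out_2)
  then show ?thesis by (simp only: sum.swap[of _ A])
qed

lemma sum_pull_out_4:
  "(\<Sum>a\<in>A. \<Sum>b\<in>B. \<Sum>c\<in>C. \<Sum>d\<in>D. \<Sum>i\<in>I. F a b c d i)
    = (\<Sum>i\<in>I. \<Sum>a\<in>A. \<Sum>b\<in>B. \<Sum>c\<in>C. \<Sum>d\<in>D. F a b c d i)"
proof -
  have "(\<Sum>a\<in>A. \<Sum>b\<in>B. \<Sum>c\<in>C. \<Sum>d\<in>D. \<Sum>i\<in>I. F a b c d i)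
      = (\<Sum>a\<in>A. \<Sum>i\<in>I. \<Sum>b\<in>B. \<Sum>c\<in>C. \<Sum>d\<in>D. F a b c d i)"
    by (rule sum.cong[OF refl], rule sum_pull_out_3)
  then show ?thesis by (simp only: sum.swap[of _ A])
qed

lemma sum_swap_4_4:
  "(\<Sum>a\<in>A. \<Sum>b\<in>B. \<Sum>c\<in>C. \<Sum>d\<in>D. \<Sum>i\<in>I. \<Sum>j\<in>J. \<Sum>k\<in>K. \<Sum>l\<in>L. F a b c d i j k l)
 = (\<Sum>i\<in>I. \<Sum>j\<in>J. \<Sum>k\<in>K. \<Sum>l\<in>L. \<Sum>a\<in>A. \<Sum>b\<in>B. \<Sum>c\<in>C. \<Sum>d\<in>D. F a b c d i j k l)"
  by (subst sum_pull_out_4, rule sum.cong[OF refl])+ (rule refl)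

lemma lc_sym_swap_12: "lc_sym b a c d = - lc_sym a b c d"
proof -
  have "(int a - int b) * (int c - int b) * (int d - int b) * (int c - int a) * (int d - int a) * (int d - int c)
     = - ((int b - int a) * (int c - int a) * (int d - int a) * (int c - int b) * (int d - int b) * (int d - int c))"
    by algebra
  then show ?thesis unfolding lc_sym_def by (simp add: sgn_minus)
qed

lemma lc_sym_swap_23: "lc_sym a c b d = - lc_sym a b c d"
proof -
  have "(int c - int a) * (int b - int a) * (int d - int a) * (int b - int c) * (int d - int c) * (int d - int b)
     = - ((int b - int a) * (int c - int a) * (int d - int a) * (int c - int b) * (int d - int b) * (int d - int c))"
    by algebra
  then show ?thesis unfolding lc_sym_def by (simp add: sgn_minus)
qed

lemma lc_sym_swap_34: "lc_sym a b d c = - lc_sym a b c d"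
proof -
  have "(int b - int a) * (int d - int a) * (int c - int a) * (int d - int b) * (int c - int b) * (int c - int d)
     = - ((int b - int a) * (int c - int a) * (int d - int a) * (int c - int b) * (int d - int b) * (int d - int c))"
    by algebra
  then show ?thesis unfolding lc_sym_def by (simp add: sgn_minus)
qed

lemma sum_lc_sym_squared: "(\<Sum>a<4. \<Sum>b<4. \<Sum>c<4. \<Sum>d<4. lc_sym a b c d * lc_sym a b c d) = 24"
  by (simp add: sum_lessThan_4 lc_sym_def)

lemma alternating_eq_lc_sym:
  fixes f :: "nat \<Rightarrow> nat \<Rightarrow> nat \<Rightarrow> nat \<Rightarrow> real"
  assumes swap12: "\<And>i j k l. f j i k l = - f i j k l"
    and swap23: "\<And>i j k l. f i k j l = - f i j k l"
    and swap34: "\<And>i j k l. f i j l k = - f i j k l"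
    and "i < 4" "j < 4" "k < 4" "l < 4"
  shows "f i j k l = lc_sym i j k l * f 0 1 2 3"
proof -
  have sort12: "j < i \<Longrightarrow> f i j k l = - f j i k l" for i j k l using swap12[of j i k l] by simp
  have sort23: "k < j \<Longrightarrow> f i j k l = - f i k j l" for i j k l using swap23[of i k j l] by simp
  have sort34: "l < k \<Longrightarrow> f i j k l = - f i j l k" for i j k l using swap34[of i j l k] by simp
  have "f i i k l = 0" "f i j j l = 0" "f i j k k = 0" for i j k l
    using swap12[of i i k l] swap23[of i j j l] swap34[of i j k k] by simp_all
  note sort = sort12 sort23 sort34 this
  show ?thesis
    using assms(4-7) by (elim less_4_cases) (simp_all add: sort lc_sym_def)
qed

lemma alternating3_eq_0:
  fixes f :: "nat \<Rightarrow> nat \<Rightarrow> nat \<Rightarrow> real"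
  assumes swap12: "\<And>i j k. f j i k = - f i j k"
    and swap23: "\<And>i j k. f i k j = - f i j k"
    and increasing: "\<And>i j k. i < j \<Longrightarrow> j < k \<Longrightarrow> k < 4 \<Longrightarrow> f i j k = 0"
    and "i < 4" "j < 4" "k < 4"
  shows "f i j k = 0"
proof -
  have sort12: "j < i \<Longrightarrow> f i j k = - f j i k" for i j k using swap12[of j i k] by simp
  have sort23: "k < j \<Longrightarrow> f i j k = - f i k j" for i j k using swap23[of i k j] by simp
  have "f i i k = 0" "f i j j = 0" for i j k
    using swap12[of i i k] swap23[of i j j] by simp_all
  moreover have "f 0 1 2 = 0" "f 0 1 3 = 0" "f 0 2 3 = 0" "f 1 2 3 = 0"
    by (simp_all add: increasing)
  ultimately show ?thesis
    using assms(4-6) by (elim less_4_cases) (simp_all add: sort12 sort23)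
qed

definition gen_kron3 :: "nat \<Rightarrow> nat \<Rightarrow> nat \<Rightarrow> nat \<Rightarrow> nat \<Rightarrow> nat \<Rightarrow> real" where
  "gen_kron3 a b q w u v =
     kron a w * (kron b u * kron q v - kron b v * kron q u)
   - kron a u * (kron b w * kron q v - kron b v * kron q w)
   + kron a v * (kron b w * kron q u - kron b u * kron q w)"

lemma sum_lc_sym_lc_sym:
  assumes "a < 4" "b < 4" "q < 4" "w < 4" "u < 4" "v < 4"
  shows "(\<Sum>p<4. lc_sym p a b q * lc_sym p w u v) = gen_kron3 a b q w u v"
proof -
  define K where "K a b q w u v = (\<Sum>p<4. lc_sym p a b q * lc_sym p w u v) - gen_kron3 a b q w u v"
    for a b q w u v
  have K_swap_12: "K b a q w u v = - K a b q w u v" for a b q w u v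
    unfolding K_def gen_kron3_def by (simp add: lc_sym_swap_23[of _ a b q] sum_negf algebra_simps)
  have K_swap_23: "K a q b w u v = - K a b q w u v" for a b q w u v
    unfolding K_def gen_kron3_def by (simp add: lc_sym_swap_34[of _ a b q] sum_negf algebra_simps)
  have K_swap_45: "K a b q u w v = - K a b q w u v" for a b q w u v
    unfolding K_def gen_kron3_def by (simp add: lc_sym_swap_23[of _ w u v] sum_negf algebra_simps)
  have K_swap_56: "K a b q w v u = - K a b q w u v" for a b q w u v
    unfolding K_def gen_kron3_def by (simp add: lc_sym_swap_34[of _ w u v] sum_negf algebra_simps)
  have K_increasing: "K a b q w u v = 0"
    if "a < b" "b < q" "q < 4" "w < u" "u < v" "v < 4" for a b q w u v
  proof -
    have "a = 0 \<and> b = 1 \<and> q = 2 \<or> a = 0 \<and> b = 1 \<and> q = 3 \<or> a = 0 \<and> b = 2 \<and> q = 3 \<or> a = 1 \<and> b = 2 \<and> q = 3"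
      using that(1-3) by auto
    moreover have "w = 0 \<and> u = 1 \<and> v = 2 \<or> w = 0 \<and> u = 1 \<and> v = 3 \<or> w = 0 \<and> u = 2 \<and> v = 3 \<or> w = 1 \<and> u = 2 \<and> v = 3"
      using that(4-6) by auto
    ultimately show ?thesis
      unfolding K_def gen_kron3_def kron_def by (elim disjE conjE; simp add: sum_lessThan_4 lc_sym_def)
  qed
  have "K a b q w u v = 0"
  proof (rule alternating3_eq_0[where f="\<lambda>a b q. K a b q w u v"])
    show "K i j k w u v = 0" if "i < j" "j < k" "k < 4" for i j k
    proof (rule alternating3_eq_0[where f="\<lambda>w u v. K i j k w u v"])
      show "K i j k w' u' v' = 0" if "w' < u'" "u' < v'" "v' < 4" for w' u' v'
        using K_increasing \<open>i < j\<close> \<open>j < k\<close> \<open>k < 4\<close> that by blast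
    qed (rule K_swap_45 K_swap_56 assms)+
  qed (rule K_swap_12 K_swap_23 assms)+
  then show ?thesis unfolding K_def by simp
qed

lemma mdet_cong: "(\<And>i j. i < 4 \<Longrightarrow> j < 4 \<Longrightarrow> A i j = B i j) \<Longrightarrow> mdet A = mdet B"
  unfolding mdet_def by (intro sum.cong refl) simp

lemma mdet_eta: "mdet eta = -1"
  by (simp add: mdet_def sum_lessThan_4 eta_def lc_sym_def)

lemma mdet_kron: "mdet kron = 1"
  by (simp add: mdet_def sum_lessThan_4 kron_def lc_sym_def)

lemma mdet_permute_rows:
  fixes M :: "nat \<Rightarrow> nat \<Rightarrow> real"
  assumes "i < 4" "j < 4" "k < 4" "l < 4"
  shows "(\<Sum>a<4. \<Sum>b<4. \<Sum>c<4. \<Sum>d<4. lc_sym a b c d * M i a * M j b * M k c * M l d)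
     = lc_sym i j k l * mdet M"
proof -
  define f where "f i j k l = (\<Sum>a<4. \<Sum>b<4. \<Sum>c<4. \<Sum>d<4. lc_sym a b c d * M i a * M j b * M k c * M l d)"
    for i j k l
  have swap12: "f j i k l = - f i j k l" for i j k l
  proof -
    have "f j i k l = (\<Sum>a<4. \<Sum>b<4. \<Sum>c<4. \<Sum>d<4. lc_sym b a c d * M j b * M i a * M k c * M l d)"
      unfolding f_def by (rule sum.swap)
    also have "\<dots> = - f i j k l"
      unfolding f_def sum_negf[symmetric] by (intro sum.cong refl) (subst lc_sym_swap_12, simp add: mult_ac)
    finally show ?thesis .
  qed
  have swap23: "f i k j l = - f i j k l" for i j k l
  proof -
    have "f i k j l = (\<Sum>a<4. \<Sum>b<4. \<Sum>c<4. \<Sum>d<4. lc_sym a c b d * M i a * M k c * M j b * M l d)"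
      unfolding f_def by (rule sum.cong[OF refl], rule sum.swap)
    also have "\<dots> = - f i j k l"
      unfolding f_def sum_negf[symmetric] by (intro sum.cong refl) (subst lc_sym_swap_23, simp add: mult_ac)
    finally show ?thesis .
  qed
  have swap34: "f i j l k = - f i j k l" for i j k l
  proof -
    have "f i j l k = (\<Sum>a<4. \<Sum>b<4. \<Sum>c<4. \<Sum>d<4. lc_sym a b d c * M i a * M j b * M l d * M k c)"
      unfolding f_def by (rule sum.cong[OF refl], rule sum.cong[OF refl], rule sum.swap)
    also have "\<dots> = - f i j k l"
      unfolding f_def sum_negf[symmetric] by (intro sum.cong refl) (subst lc_sym_swap_34, simp add: mult_ac)
    finally show ?thesis .
  qed
  have "f i j k l = lc_sym i j k l * f 0 1 2 3"
    by (rule alternating_eq_lc_sym[OF swap12 swap23 swap34 assms])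
  moreover have "f 0 1 2 3 = mdet M" unfolding f_def mdet_def by (simp add: mult_ac)
  ultimately show ?thesis unfolding f_def by simp
qed

lemma mdet_mult:
  fixes A B :: "nat \<Rightarrow> nat \<Rightarrow> real"
  shows "mdet (\<lambda>a c. \<Sum>b<4. A a b * B b c) = mdet A * mdet B"
proof -
  have expand: "lc_sym a b c d * (\<Sum>i<4. A 0 i * B i a) * (\<Sum>j<4. A 1 j * B j b)
      * (\<Sum>k<4. A 2 k * B k c) * (\<Sum>l<4. A 3 l * B l d)
    = (\<Sum>i<4. \<Sum>j<4. \<Sum>k<4. \<Sum>l<4.
         A 0 i * A 1 j * A 2 k * A 3 l * (lc_sym a b c d * B i a * B j b * B k c * B l d))" for a b c d
    by (simp add: sum_distrib_left sum_distrib_right mult_ac)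
  have "mdet (\<lambda>a c. \<Sum>b<4. A a b * B b c)
    = (\<Sum>a<4. \<Sum>b<4. \<Sum>c<4. \<Sum>d<4. \<Sum>i<4. \<Sum>j<4. \<Sum>k<4. \<Sum>l<4.
         A 0 i * A 1 j * A 2 k * A 3 l * (lc_sym a b c d * B i a * B j b * B k c * B l d))"
    unfolding mdet_def expand ..
  also have "\<dots> = (\<Sum>i<4. \<Sum>j<4. \<Sum>k<4. \<Sum>l<4. \<Sum>a<4. \<Sum>b<4. \<Sum>c<4. \<Sum>d<4.
         A 0 i * A 1 j * A 2 k * A 3 l * (lc_sym a b c d * B i a * B j b * B k c * B l d))"
    by (rule sum_swap_4_4)
  also have "\<dots> = (\<Sum>i<4. \<Sum>j<4. \<Sum>k<4. \<Sum>l<4. A 0 i * A 1 j * A 2 k * A 3 l * (lc_sym i j k l * mdet B))"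
    by (intro sum.cong refl) (simp add: sum_distrib_left[symmetric] mdet_permute_rows)
  also have "\<dots> = (\<Sum>i<4. \<Sum>j<4. \<Sum>k<4. \<Sum>l<4. lc_sym i j k l * A 0 i * A 1 j * A 2 k * A 3 l) * mdet B"
    by (simp add: sum_distrib_left sum_distrib_right mult_ac)
  also have "\<dots> = mdet A * mdet B"
    unfolding mdet_def[of A] ..
  finally show ?thesis .
qed

text \<open>Both determinants are one twenty-fourth of the double sum
  \<open>\<Sum> lc_sym a b c d * lc_sym i j k l * M a i * M b j * M c k * M d l\<close>.\<close>

lemma mdet_transpose: "mdet (\<lambda>i j. M j i) = mdet M"
proof -
  let ?T = "\<Sum>a<4. \<Sum>b<4. \<Sum>c<4. \<Sum>d<4. \<Sum>i<4. \<Sum>j<4. \<Sum>k<4. \<Sum>l<4.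
      lc_sym a b c d * lc_sym i j k l * (M a i * M b j * M c k * M d l)"
  have "?T = (\<Sum>a<4. \<Sum>b<4. \<Sum>c<4. \<Sum>d<4. lc_sym a b c d *
      (\<Sum>i<4. \<Sum>j<4. \<Sum>k<4. \<Sum>l<4. lc_sym i j k l * M a i * M b j * M c k * M d l))"
    by (simp add: sum_distrib_left mult_ac)
  also have "\<dots> = (\<Sum>a<4. \<Sum>b<4. \<Sum>c<4. \<Sum>d<4. lc_sym a b c d * (lc_sym a b c d * mdet M))"
    by (intro sum.cong refl) (simp add: mdet_permute_rows)
  also have "\<dots> = 24 * mdet M"
    using sum_lc_sym_squared by (simp add: sum_distrib_right[symmetric] mult.assoc[symmetric])
  finally have T_eq: "?T = 24 * mdet M" .
  have "?T = (\<Sum>i<4. \<Sum>j<4. \<Sum>k<4. \<Sum>l<4. \<Sum>a<4. \<Sum>b<4. \<Sum>c<4. \<Sum>d<4.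
      lc_sym a b c d * lc_sym i j k l * (M a i * M b j * M c k * M d l))"
    by (rule sum_swap_4_4)
  also have "\<dots> = (\<Sum>i<4. \<Sum>j<4. \<Sum>k<4. \<Sum>l<4. lc_sym i j k l *
      (\<Sum>a<4. \<Sum>b<4. \<Sum>c<4. \<Sum>d<4. lc_sym a b c d * M a i * M b j * M c k * M d l))"
    by (simp add: sum_distrib_left mult_ac)
  also have "\<dots> = (\<Sum>i<4. \<Sum>j<4. \<Sum>k<4. \<Sum>l<4. lc_sym i j k l * (lc_sym i j k l * mdet (\<lambda>i j. M j i)))"
    by (intro sum.cong refl) (use mdet_permute_rows[of _ _ _ _ "\<lambda>i j. M j i"] in simp)
  also have "\<dots> = 24 * mdet (\<lambda>i j. M j i)"
    using sum_lc_sym_squared by (simp add: sum_distrib_right[symmetric] mult.assoc[symmetric])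
  finally show ?thesis using T_eq by simp
qed

lemma right_inverse_imp_left_inverse:
  fixes A B :: "nat \<Rightarrow> nat \<Rightarrow> real"
  assumes AB: "\<And>a c. a < 4 \<Longrightarrow> c < 4 \<Longrightarrow> (\<Sum>b<4. A a b * B b c) = kron a c"
    and "a < 4" "c < 4"
  shows "(\<Sum>b<4. B a b * A b c) = kron a c"
proof -
  obtain h :: "nat \<Rightarrow> 4" where h: "bij_betw h {..<4} UNIV"
    using ex_bij_betw_nat_finite[of "UNIV::4 set"] by (auto simp: atLeast0LessThan)
  define k where "k = inv_into {..<4} h"
  have k: "bij_betw k UNIV {..<4}" using bij_betw_inv_into[OF h] k_def by simp
  have kh: "x < 4 \<Longrightarrow> k (h x) = x" for x using h by (simp add: k_def bij_betw_inv_into_left)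
  have k_less: "k i < 4" for i using k bij_betwE by blast
  have k_eq_iff: "k i = k j \<longleftrightarrow> i = j" for i j
    using k by (meson bij_betw_imp_inj_on inj_on_eq_iff UNIV_I)
  have sum_k: "(\<Sum>l\<in>UNIV. F (k l)) = (\<Sum>b<4. F b)" for F :: "nat \<Rightarrow> real"
    using sum.reindex_bij_betw[OF k] .
  define A' :: "real^4^4" where "A' = (\<chi> i j. A (k i) (k j))"
  define B' :: "real^4^4" where "B' = (\<chi> i j. B (k i) (k j))"
  have "(A' ** B') $ i $ j = mat 1 $ i $ j" for i j
    using AB[OF k_less k_less] k_eq_iff
    by (simp add: matrix_matrix_mult_def A'_def B'_def sum_k[of "\<lambda>b. A (k i) b * B b (k j)"] mat_def kron_def)
  then have "B' ** A' = mat 1"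
    using matrix_left_right_inverse by (metis vec_eq_iff)
  moreover have "h a = h c \<longleftrightarrow> a = c" using kh assms(2,3) by metis
  moreover have "(\<Sum>b<4. B a b * A b c) = (B' ** A') $ h a $ h c"
    using sum_k[of "\<lambda>b. B a b * A b c"] kh assms(2,3)
    by (simp add: matrix_matrix_mult_def A'_def B'_def)
  ultimately show ?thesis by (simp add: mat_def kron_def)
qed

lemma right_inverse_unique:
  fixes L g h :: "nat \<Rightarrow> nat \<Rightarrow> real"
  assumes L: "\<And>a c. a < 4 \<Longrightarrow> c < 4 \<Longrightarrow> (\<Sum>b<4. L a b * g b c) = kron a c"
    and h: "\<And>a c. a < 4 \<Longrightarrow> c < 4 \<Longrightarrow> (\<Sum>b<4. g a b * h b c) = kron a c"
    and "b < 4" "c < 4"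
  shows "h b c = L b c"
proof -
  have "h b c = (\<Sum>a<4. kron b a * h a c)" using assms(3) by (simp add: sum_kron_left)
  also have "\<dots> = (\<Sum>a<4. \<Sum>d<4. L b d * g d a * h a c)"
    using assms(3) by (intro sum.cong refl) (simp add: sum_distrib_right[symmetric] L)
  also have "\<dots> = (\<Sum>d<4. L b d * (\<Sum>a<4. g d a * h a c))"
    by (subst sum.swap) (simp add: sum_distrib_left mult.assoc)
  also have "\<dots> = L b c" using h assms(4) by (simp add: sum_kron_right)
  finally show ?thesis .
qed

context
  fixes g :: "nat \<Rightarrow> nat \<Rightarrow> real"
  assumes lor: "lorentzian g"
begin

lemma lorentzian_sym: "a < 4 \<Longrightarrow> b < 4 \<Longrightarrow> g a b = g b a"
  using lor unfolding lorentzian_def by blast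

lemma lorentzian_frame:
  obtains E where "\<And>i j. i < 4 \<Longrightarrow> j < 4 \<Longrightarrow> (\<Sum>a<4. \<Sum>b<4. E i a * E j b * g a b) = eta i j"
  using lor unfolding lorentzian_def by blast

text \<open>With \<open>E g E\<^sup>T = eta\<close> and \<open>eta\<inverse> = eta\<close>, the matrix \<open>E\<^sup>T eta E\<close>
  is a left inverse of \<open>g\<close>.\<close>

lemma lorentzian_right_inverse:
  obtains P where "\<And>a c. a < 4 \<Longrightarrow> c < 4 \<Longrightarrow> (\<Sum>b<4. g a b * P b c) = kron a c"
proof -
  obtain E where E: "\<And>i j. i < 4 \<Longrightarrow> j < 4 \<Longrightarrow> (\<Sum>a<4. \<Sum>b<4. E i a * E j b * g a b) = eta i j"
    using lorentzian_frame by blast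
  define Q where "Q i b = (\<Sum>a<4. E i a * g a b)" for i b
  define R where "R b k = E k b * eta k k" for b k
  have "(\<Sum>b<4. Q i b * R b k) = kron i k" if "i < 4" "k < 4" for i k
  proof -
    have "(\<Sum>b<4. Q i b * R b k) = (\<Sum>a<4. \<Sum>b<4. E i a * E k b * g a b) * eta k k"
      unfolding Q_def R_def by (simp add: sum_distrib_left sum_distrib_right mult_ac) (subst sum.swap, simp)
    also have "\<dots> = kron i k" using E that by (simp add: eta_def kron_def)
    finally show ?thesis .
  qed
  then have RQ: "(\<Sum>k<4. R b k * Q k c) = kron b c" if "b < 4" "c < 4" for b c
    using right_inverse_imp_left_inverse that by blast
  define P where "P b a = (\<Sum>k<4. E k b * eta k k * E k a)" for b a
  have "(\<Sum>a<4. P b a * g a c) = kron b c" if "b < 4" "c < 4" for b c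
  proof -
    have "(\<Sum>a<4. P b a * g a c) = (\<Sum>k<4. R b k * Q k c)"
      unfolding P_def R_def Q_def by (simp add: sum_distrib_left sum_distrib_right mult_ac) (subst sum.swap, simp)
    then show ?thesis using RQ that by simp
  qed
  then show ?thesis
    using that right_inverse_imp_left_inverse by blast
qed

lemma ginv_right: "a < 4 \<Longrightarrow> c < 4 \<Longrightarrow> (\<Sum>b<4. g a b * ginv g b c) = kron a c"
proof -
  obtain P where P: "\<And>a c. a < 4 \<Longrightarrow> c < 4 \<Longrightarrow> (\<Sum>b<4. g a b * P b c) = kron a c"
    using lorentzian_right_inverse by blast
  have P_left: "\<And>a c. a < 4 \<Longrightarrow> c < 4 \<Longrightarrow> (\<Sum>b<4. P a b * g b c) = kron a c"
    using right_inverse_imp_left_inverse P by blast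
  define P' where "P' a b = (if a < 4 \<and> b < 4 then P a b else 0)" for a b
  have "\<exists>!h. (\<forall>a<4. \<forall>c<4. (\<Sum>b<4. g a b * h b c) = (if a = c then 1 else 0))
             \<and> (\<forall>a b. \<not> (a < 4 \<and> b < 4) \<longrightarrow> h a b = 0)"
  proof (rule ex1I[of _ P'])
    show "(\<forall>a<4. \<forall>c<4. (\<Sum>b<4. g a b * P' b c) = (if a = c then 1 else 0))
        \<and> (\<forall>a b. \<not> (a < 4 \<and> b < 4) \<longrightarrow> P' a b = 0)"
      using P by (simp add: P'_def kron_def)
  next
    fix h assume h: "(\<forall>a<4. \<forall>c<4. (\<Sum>b<4. g a b * h b c) = (if a = c then 1 else 0))
        \<and> (\<forall>a b. \<not> (a < 4 \<and> b < 4) \<longrightarrow> h a b = 0)"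
    have "h a b = P' a b" for a b
      using right_inverse_unique[of P g h a b] P_left h by (auto simp: P'_def kron_def)
    then show "h = P'" by blast
  qed
  from theI'[OF this] show "a < 4 \<Longrightarrow> c < 4 \<Longrightarrow> ?thesis"
    unfolding ginv_def[symmetric] by (simp add: kron_def)
qed

lemma ginv_left: "a < 4 \<Longrightarrow> c < 4 \<Longrightarrow> (\<Sum>b<4. ginv g a b * g b c) = kron a c"
  using right_inverse_imp_left_inverse[of g "ginv g", OF ginv_right] by blast

lemma ginv_sym: "a < 4 \<Longrightarrow> c < 4 \<Longrightarrow> ginv g a c = ginv g c a"
proof -
  assume "a < 4" "c < 4"
  have "(\<Sum>b<4. g a b * ginv g c b) = kron a c" if "a < 4" "c < 4" for a c
    using ginv_left[of c a] that by (simp add: lorentzian_sym mult.commute kron_commute)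
  then show ?thesis
    using right_inverse_unique[of "ginv g" g "\<lambda>b c. ginv g c b" a c] ginv_left \<open>a < 4\<close> \<open>c < 4\<close> by simp
qed

lemma ginv_transpose_left: "a < 4 \<Longrightarrow> c < 4 \<Longrightarrow> (\<Sum>b<4. ginv g b a * g b c) = kron a c"
  using ginv_left[of a c] by (simp add: ginv_sym)

lemma lorentzian_mdet_neg: "mdet g < 0"
proof -
  obtain E where E: "\<And>i j. i < 4 \<Longrightarrow> j < 4 \<Longrightarrow> (\<Sum>a<4. \<Sum>b<4. E i a * E j b * g a b) = eta i j"
    using lorentzian_frame by blast
  define Q where "Q i b = (\<Sum>a<4. E i a * g a b)" for i b
  have "mdet eta = mdet (\<lambda>i j. \<Sum>b<4. Q i b * E j b)"
  proof (rule mdet_cong)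
    fix i j :: nat assume "i < 4" "j < 4"
    then show "eta i j = (\<Sum>b<4. Q i b * E j b)"
      using E[of i j] unfolding Q_def
      by (simp add: sum_distrib_left sum_distrib_right mult_ac) (subst sum.swap, simp)
  qed
  also have "\<dots> = mdet Q * mdet (\<lambda>i j. E j i)"
    using mdet_mult[of Q "\<lambda>i j. E j i"] by simp
  also have "\<dots> = mdet E * mdet g * mdet E"
    unfolding Q_def mdet_mult mdet_transpose[of E] ..
  finally have "mdet E * mdet E * mdet g = -1" using mdet_eta by (simp add: mult_ac)
  moreover have "mdet E * mdet E \<ge> 0" by simp
  ultimately show ?thesis
    using mult_nonneg_nonneg[of "mdet E * mdet E" "mdet g"] by linarith
qed

lemma mdet_ginv: "mdet (ginv g) = 1 / mdet g"
proof -
  have "mdet (ginv g) * mdet g = mdet (\<lambda>a c. \<Sum>b<4. ginv g a b * g b c)"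
    by (rule mdet_mult[symmetric])
  also have "\<dots> = mdet kron" by (rule mdet_cong) (simp add: ginv_left)
  finally show ?thesis
    using lorentzian_mdet_neg by (simp add: mdet_kron field_simps)
qed

end

definition lower :: "(nat \<Rightarrow> nat \<Rightarrow> real) \<Rightarrow> (nat \<Rightarrow> real) \<Rightarrow> nat \<Rightarrow> real" where
  "lower g v a = (\<Sum>b<4. g a b * v b)"

definition raise :: "(nat \<Rightarrow> nat \<Rightarrow> real) \<Rightarrow> (nat \<Rightarrow> real) \<Rightarrow> nat \<Rightarrow> real" where
  "raise g v a = (\<Sum>b<4. ginv g a b * v b)"

definition skew :: "(nat \<Rightarrow> nat \<Rightarrow> real) \<Rightarrow> bool" where
  "skew F \<longleftrightarrow> (\<forall>a<4. \<forall>b<4. F a b = - F b a)"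

definition hodge :: "(nat \<Rightarrow> nat \<Rightarrow> real) \<Rightarrow> (nat \<Rightarrow> nat \<Rightarrow> real) \<Rightarrow> nat \<Rightarrow> nat \<Rightarrow> real" where
  "hodge g F a b = 1/2 * (\<Sum>p<4. \<Sum>q<4. eps_mix g a b p q * F p q)"

definition electric :: "(nat \<Rightarrow> nat \<Rightarrow> real) \<Rightarrow> (nat \<Rightarrow> real) \<Rightarrow> nat \<Rightarrow> real" where
  "electric F t a = (\<Sum>b<4. F a b * t b)"

definition magnetic ::
  "(nat \<Rightarrow> nat \<Rightarrow> real) \<Rightarrow> (nat \<Rightarrow> nat \<Rightarrow> real) \<Rightarrow> (nat \<Rightarrow> real) \<Rightarrow> nat \<Rightarrow> real" where
  "magnetic g F t a = - electric (hodge g F) t a"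

text \<open>The 2-form with electric part \<open>E\<close> and magnetic part \<open>B\<close> relative to \<open>t\<close>,
  scaled by \<open>t\<^sub>m t\<^sup>m\<close>.\<close>

definition em_form ::
  "(nat \<Rightarrow> nat \<Rightarrow> real) \<Rightarrow> (nat \<Rightarrow> real) \<Rightarrow> (nat \<Rightarrow> real) \<Rightarrow> (nat \<Rightarrow> real) \<Rightarrow> nat \<Rightarrow> nat \<Rightarrow> real" where
  "em_form g t E B a b =
     (\<Sum>p<4. \<Sum>q<4. (g4 g a b p q * raise g E p + eps_low g a b p q * raise g B p) * t q)"

lemma sqnorm_eq_lower: "sqnorm g t = (\<Sum>m<4. lower g t m * t m)"
  unfolding sqnorm_def lower_def by (simp add: sum_distrib_left sum_distrib_right mult_ac)

lemma g4_contract: "(\<Sum>p<4. \<Sum>q<4. g4 g a b p q * w p * t q) = lower g w a * lower g t b - lower g t a * lower g w b"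
proof -
  have "(\<Sum>p<4. \<Sum>q<4. g4 g a b p q * w p * t q)
     = (\<Sum>p<4. \<Sum>q<4. (g a p * w p) * (g b q * t q)) - (\<Sum>p<4. \<Sum>q<4. (g a q * t q) * (g b p * w p))"
    unfolding g4_def by (simp add: sum_subtractf[symmetric] algebra_simps)
  also have "(\<Sum>p<4. \<Sum>q<4. (g a q * t q) * (g b p * w p)) = (\<Sum>q<4. \<Sum>p<4. (g a q * t q) * (g b p * w p))"
    by (rule sum.swap)
  finally show ?thesis unfolding lower_def by (simp only: sum_product)
qed

lemma gen_kron3_contract:
  assumes "skew F" "a < 4" "b < 4"
  shows "(\<Sum>q<4. \<Sum>w<4. \<Sum>u<4. \<Sum>v<4. gen_kron3 a b q w u v * T w * F u v * t q)
    = 2 * (T a * electric F t b - T b * electric F t a + (\<Sum>m<4. T m * t m) * F a b)"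
proof -
  let ?Y = "\<lambda>q w u v. T w * F u v * t q"
  have expand: "gen_kron3 a b q w u v * T w * F u v * t q =
      kron a w * (kron b u * (kron q v * ?Y q w u v)) - kron a w * (kron b v * (kron q u * ?Y q w u v))
    - kron a u * (kron b w * (kron q v * ?Y q w u v)) + kron a u * (kron b v * (kron q w * ?Y q w u v))
    + kron a v * (kron b w * (kron q u * ?Y q w u v)) - kron a v * (kron b u * (kron q w * ?Y q w u v))"
    for q w u v
    unfolding gen_kron3_def by (simp add: algebra_simps)
  have "(\<Sum>q<4. \<Sum>w<4. \<Sum>u<4. \<Sum>v<4. gen_kron3 a b q w u v * T w * F u v * t q)
    = (\<Sum>q<4. T a * F b q * t q) - (\<Sum>q<4. T a * F q b * t q) - (\<Sum>q<4. T b * F a q * t q)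
     + (\<Sum>q<4. T q * F a b * t q) + (\<Sum>q<4. T b * F q a * t q) - (\<Sum>q<4. T q * F b a * t q)"
    unfolding expand using assms(2,3)
    by (simp only: sum.distrib sum_subtractf) (simp add: sum_kron_left kron_commute[of _ a]
        kron_commute[of _ b] sum_distrib_left[symmetric])
  also have "\<dots> = 2 * (T a * electric F t b - T b * electric F t a + (\<Sum>m<4. T m * t m) * F a b)"
  proof -
    have F_swap: "F i j = - F j i" if "i < 4" "j < 4" for i j
      using assms(1) that unfolding skew_def by blast
    have "(\<Sum>q<4. T a * F q b * t q) = - (\<Sum>q<4. T a * F b q * t q)"
      unfolding sum_negf[symmetric] using assms(3) by (intro sum.cong refl) (simp add: F_swap[of _ b])
    moreover have "(\<Sum>q<4. T b * F q a * t q) = - (\<Sum>q<4. T b * F a q * t q)"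
      unfolding sum_negf[symmetric] using assms(2) by (intro sum.cong refl) (simp add: F_swap[of _ a])
    moreover have "(\<Sum>q<4. T q * F b a * t q) = - (\<Sum>q<4. T q * F a b * t q)"
      unfolding sum_negf[symmetric] using assms(2,3) by (intro sum.cong refl) (simp add: F_swap[of b a])
    ultimately show ?thesis unfolding electric_def
      by (simp add: sum_distrib_left sum_distrib_right sum_negf mult_ac)
  qed
  finally show ?thesis .
qed

context
  fixes g :: "nat \<Rightarrow> nat \<Rightarrow> real"
  assumes lor: "lorentzian g"
begin

lemma eps_low_raise_all:
  assumes "p < 4" "w < 4" "u < 4" "v < 4"
  shows "(\<Sum>x<4. \<Sum>y<4. \<Sum>r<4. \<Sum>s<4.
            eps_low g x y r s * ginv g p x * ginv g w y * ginv g u r * ginv g v s)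
       = - lc_sym p w u v / sqrt (- mdet g)"
proof -
  have "(\<Sum>x<4. \<Sum>y<4. \<Sum>r<4. \<Sum>s<4.
            eps_low g x y r s * ginv g p x * ginv g w y * ginv g u r * ginv g v s)
      = sqrt (- mdet g) * (\<Sum>x<4. \<Sum>y<4. \<Sum>r<4. \<Sum>s<4.
            lc_sym x y r s * ginv g p x * ginv g w y * ginv g u r * ginv g v s)"
    by (simp add: eps_low_def sum_distrib_left mult_ac)
  also have "\<dots> = sqrt (- mdet g) * lc_sym p w u v / mdet g"
    by (simp add: mdet_permute_rows[OF assms] mdet_ginv[OF lor])
  also have "\<dots> = - lc_sym p w u v / sqrt (- mdet g)"
  proof -
    have "mdet g < 0" by (rule lorentzian_mdet_neg[OF lor])
    then show ?thesis by (simp add: field_simps flip: mult.assoc)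
  qed
  finally show ?thesis .
qed

lemma ginv_contract_eps_mix:
  assumes "p < 4" "y < 4" "u < 4" "v < 4"
  shows "(\<Sum>x<4. ginv g p x * eps_mix g x y u v) = - (\<Sum>w<4. lc_sym p w u v * g w y) / sqrt (- mdet g)"
proof -
  let ?e = "eps_low g" and ?G = "ginv g"
  have "- (\<Sum>w<4. lc_sym p w u v * g w y) / sqrt (- mdet g)
     = (\<Sum>w<4. (\<Sum>x<4. \<Sum>y'<4. \<Sum>r<4. \<Sum>s<4. ?e x y' r s * ?G p x * ?G w y' * ?G u r * ?G v s) * g w y)"
    using assms eps_low_raise_all by (simp add: sum_divide_distrib sum_negf)
  also have "\<dots> = (\<Sum>w<4. \<Sum>x<4. \<Sum>y'<4. \<Sum>r<4. \<Sum>s<4. ?e x y' r s * ?G p x * (?G w y' * g w y) * ?G u r * ?G v s)"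
    by (simp add: sum_distrib_right sum_distrib_left mult_ac)
  also have "\<dots> = (\<Sum>x<4. \<Sum>y'<4. \<Sum>r<4. \<Sum>s<4. \<Sum>w<4. ?e x y' r s * ?G p x * (?G w y' * g w y) * ?G u r * ?G v s)"
    by (rule sum_pull_out_4[symmetric])
  also have "\<dots> = (\<Sum>x<4. \<Sum>y'<4. \<Sum>r<4. \<Sum>s<4. ?e x y' r s * ?G p x * (\<Sum>w<4. ?G w y' * g w y) * ?G u r * ?G v s)"
    by (intro sum.cong refl) (simp add: sum_distrib_left sum_distrib_right mult_ac)
  also have "\<dots> = (\<Sum>x<4. \<Sum>y'<4. kron y y' * (\<Sum>r<4. \<Sum>s<4. ?e x y' r s * ?G p x * ?G u r * ?G v s))"
    using assms by (intro sum.cong refl) (simp only: lessThan_iff ginv_transpose_left[OF lor], simp add: kron_commute sum_distrib_left mult_ac)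
  also have "\<dots> = (\<Sum>x<4. \<Sum>r<4. \<Sum>s<4. ?e x y r s * ?G p x * ?G u r * ?G v s)"
    using assms by (simp add: sum_kron_left)
  also have "\<dots> = (\<Sum>x<4. ?G p x * eps_mix g x y u v)"
    unfolding eps_mix_def by (intro sum.cong refl) (simp add: sum_distrib_left ginv_sym[OF lor] assms mult_ac)
  finally show ?thesis by simp
qed

lemma lower_raise: "a < 4 \<Longrightarrow> lower g (raise g v) a = v a"
proof -
  assume "a < 4"
  have "lower g (raise g v) a = (\<Sum>p<4. \<Sum>x<4. g a p * ginv g p x * v x)"
    unfolding lower_def raise_def by (simp add: sum_distrib_left mult.assoc)
  also have "\<dots> = (\<Sum>x<4. (\<Sum>p<4. g a p * ginv g p x) * v x)"
    by (subst sum.swap) (simp add: sum_distrib_right)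
  also have "\<dots> = v a" using \<open>a < 4\<close> by (simp add: ginv_right[OF lor] sum_kron_left)
  finally show ?thesis .
qed

lemma raise_magnetic:
  assumes "p < 4"
  shows "raise g (magnetic g F t) p
    = (\<Sum>w<4. \<Sum>u<4. \<Sum>v<4. lc_sym p w u v * lower g t w * F u v) / (2 * sqrt (- mdet g))"
proof -
  have "raise g (magnetic g F t) p
     = - (1/2) * (\<Sum>x<4. \<Sum>q<4. \<Sum>u<4. \<Sum>v<4. ginv g p x * eps_mix g x q u v * (F u v * t q))"
    unfolding raise_def magnetic_def electric_def hodge_def
    by (simp add: sum_distrib_left sum_distrib_right sum_negf mult_ac)
  also have "\<dots> = - (1/2) * (\<Sum>q<4. \<Sum>u<4. \<Sum>v<4. \<Sum>x<4. ginv g p x * eps_mix g x q u v * (F u v * t q))"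
    by (subst sum_pull_out_3[symmetric]) (rule refl)
  also have "\<dots> = - (1/2) * (\<Sum>q<4. \<Sum>u<4. \<Sum>v<4. (\<Sum>x<4. ginv g p x * eps_mix g x q u v) * (F u v * t q))"
    by (simp only: sum_distrib_right)
  also have "\<dots> = - (1/2) * (\<Sum>q<4. \<Sum>u<4. \<Sum>v<4.
      (- (\<Sum>w<4. lc_sym p w u v * g w q) / sqrt (- mdet g)) * (F u v * t q))"
    using assms by (simp add: ginv_contract_eps_mix)
  also have "\<dots> = (\<Sum>q<4. \<Sum>u<4. \<Sum>v<4. \<Sum>w<4. lc_sym p w u v * g w q * (F u v * t q)) / (2 * sqrt (- mdet g))"
    by (simp add: sum_distrib_left sum_distrib_right sum_divide_distrib sum_negf mult_ac)
  also have "\<dots> = (\<Sum>w<4. \<Sum>u<4. \<Sum>v<4. \<Sum>q<4. lc_sym p w u v * g w q * (F u v * t q)) / (2 * sqrt (- mdet g))"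
    by (subst sum_pull_out_3, subst sum_pull_out_2[symmetric]) (rule refl)
  also have "\<dots> = (\<Sum>w<4. \<Sum>u<4. \<Sum>v<4. lc_sym p w u v * lower g t w * F u v) / (2 * sqrt (- mdet g))"
    unfolding lower_def by (simp add: sum_distrib_left sum_distrib_right mult_ac)
  finally show ?thesis .
qed

lemma eps_low_contract_magnetic:
  assumes "skew F" "a < 4" "b < 4"
  shows "(\<Sum>p<4. \<Sum>q<4. eps_low g a b p q * raise g (magnetic g F t) p * t q)
    = lower g t a * electric F t b - lower g t b * electric F t a + sqnorm g t * F a b"
proof -
  have "sqrt (- mdet g) \<noteq> 0" using lorentzian_mdet_neg[OF lor] by simp
  moreover have "lc_sym a b p q = lc_sym p a b q" for p q
    using lc_sym_swap_23[of a p b q] lc_sym_swap_12[of p a b q] by simp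
  ultimately have "(\<Sum>p<4. \<Sum>q<4. eps_low g a b p q * raise g (magnetic g F t) p * t q)
    = 1/2 * (\<Sum>p<4. \<Sum>q<4. \<Sum>w<4. \<Sum>u<4. \<Sum>v<4.
              lc_sym p a b q * lc_sym p w u v * (lower g t w * F u v * t q))"
    by (simp add: raise_magnetic eps_low_def sum_distrib_left sum_distrib_right sum_divide_distrib mult_ac)
  also have "\<dots> = 1/2 * (\<Sum>q<4. \<Sum>w<4. \<Sum>u<4. \<Sum>v<4.
              (\<Sum>p<4. lc_sym p a b q * lc_sym p w u v) * (lower g t w * F u v * t q))"
    by (subst sum_pull_out_4[symmetric]) (simp only: sum_distrib_right)
  also have "\<dots> = 1/2 * (\<Sum>q<4. \<Sum>w<4. \<Sum>u<4. \<Sum>v<4. gen_kron3 a b q w u v * lower g t w * F u v * t q)"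
    using assms(2,3) by (simp add: sum_lc_sym_lc_sym mult.assoc)
  finally show ?thesis
    using gen_kron3_contract[OF assms, of "lower g t" t] by (simp add: sqnorm_eq_lower)
qed

theorem two_form_decomposition:
  assumes "skew F" "a < 4" "b < 4"
  shows "em_form g t (electric F t) (magnetic g F t) a b = sqnorm g t * F a b"
proof -
  have "em_form g t (electric F t) (magnetic g F t) a b
      = (\<Sum>p<4. \<Sum>q<4. g4 g a b p q * raise g (electric F t) p * t q)
      + (\<Sum>p<4. \<Sum>q<4. eps_low g a b p q * raise g (magnetic g F t) p * t q)"
    unfolding em_form_def by (simp add: distrib_right sum.distrib)
  also have "(\<Sum>p<4. \<Sum>q<4. g4 g a b p q * raise g (electric F t) p * t q)
      = electric F t a * lower g t b - lower g t a * electric F t b"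
    using assms(2,3) by (simp add: g4_contract lower_raise)
  finally show ?thesis
    using assms by (simp add: eps_low_contract_magnetic)
qed

end

lemma em_form_cong:
  assumes "\<And>x. x < 4 \<Longrightarrow> E x = E' x" "\<And>x. x < 4 \<Longrightarrow> B x = B' x"
  shows "em_form g t E B a b = em_form g t E' B' a b"
  unfolding em_form_def raise_def using assms by simp

lemma em_form_scale: "em_form g t (\<lambda>x. k * E x) (\<lambda>x. k * B x) a b = k * em_form g t E B a b"
  unfolding em_form_def raise_def by (simp add: sum_distrib_left algebra_simps)

lemma raise2_eq_raise: "raise2 g A p r = raise g (\<lambda>x. raise g (A x) r) p"
  unfolding raise2_def raise_def by (simp add: sum_distrib_left mult_ac)

lemma raise_em_form:
  "raise g (\<lambda>x. em_form g t (A x) (B x) c d) p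
     = (\<Sum>r<4. \<Sum>s<4. (g4 g c d r s * raise2 g A p r + eps_low g c d r s * raise2 g B p r) * t s)"
proof -
  have "raise g (\<lambda>x. em_form g t (A x) (B x) c d) p
     = (\<Sum>x<4. \<Sum>r<4. \<Sum>s<4. ginv g p x * ((g4 g c d r s * raise g (A x) r + eps_low g c d r s * raise g (B x) r) * t s))"
    unfolding raise_def[of g "\<lambda>x. em_form g t (A x) (B x) c d"]
    unfolding em_form_def by (simp add: sum_distrib_left)
  also have "\<dots> = (\<Sum>r<4. \<Sum>s<4. \<Sum>x<4. ginv g p x * ((g4 g c d r s * raise g (A x) r + eps_low g c d r s * raise g (B x) r) * t s))"
    by (rule sum_pull_out_2[symmetric])
  also have "\<dots> = (\<Sum>r<4. \<Sum>s<4. (g4 g c d r s * raise2 g A p r + eps_low g c d r s * raise2 g B p r) * t s)"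
    unfolding raise2_eq_raise raise_def[of g "\<lambda>x. raise g (_ x) r" for r]
    by (simp add: sum_distrib_left sum_distrib_right sum.distrib algebra_simps)
  finally show ?thesis .
qed

lemma em_form_em_form:
  "em_form g t (\<lambda>x. em_form g t (A x) (B x) c d) (\<lambda>x. em_form g t (C x) (D x) c d) a b
   = (\<Sum>p<4. \<Sum>q<4. \<Sum>r<4. \<Sum>s<4.
       (g4 g a b p q * (g4 g c d r s * raise2 g A p r + eps_low g c d r s * raise2 g B p r)
        + eps_low g a b p q * (g4 g c d r s * raise2 g C p r + eps_low g c d r s * raise2 g D p r))
       * t q * t s)"
  unfolding em_form_def[of g t "\<lambda>x. em_form g t (A x) (B x) c d"] raise_em_form
  by (simp add: sum_distrib_left sum_distrib_right sum.distrib algebra_simps)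

lemma hodge_uminus: "hodge g (\<lambda>u v. - F u v) = (\<lambda>c d. - hodge g F c d)"
  unfolding hodge_def by (simp add: sum_negf)

lemma electric_uminus: "electric (\<lambda>c d. - F c d) t = (\<lambda>a. - electric F t a)"
  unfolding electric_def by (simp add: sum_negf)

lemma hodge_electric:
  "hodge g (\<lambda>u v. electric (\<lambda>a b. Y a b u v) t x) c d = electric (\<lambda>a b. hodge g (Y a b) c d) t x"
proof -
  have "hodge g (\<lambda>u v. electric (\<lambda>a b. Y a b u v) t x) c d
      = 1/2 * (\<Sum>p<4. \<Sum>q<4. \<Sum>b<4. eps_mix g c d p q * Y x b p q * t b)"
    unfolding hodge_def electric_def by (simp add: sum_distrib_left mult.assoc)
  also have "\<dots> = electric (\<lambda>a b. hodge g (Y a b) c d) t x"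
    unfolding hodge_def electric_def by (subst sum_pull_out_2) (simp add: sum_distrib_left sum_distrib_right mult_ac)
  finally show ?thesis .
qed

lemma contr_eq_electric: "contr Y t x = electric (\<lambda>c d. electric (\<lambda>a b. Y a b c d) t x) t"
  unfolding contr_def electric_def by (subst sum.swap) (simp add: sum_distrib_right)

lemma double_dual_eq_hodge: "double_dual g X a b c d = hodge g (left_dual g X a b) c d"
proof -
  have "double_dual g X a b c d
      = 1/4 * (\<Sum>r<4. \<Sum>p<4. \<Sum>q<4. \<Sum>s<4. eps_mix g a b p q * eps_mix g c d r s * X p q r s)"
    unfolding double_dual_def by (subst sum_pull_out_2) (rule refl)
  also have "\<dots> = 1/4 * (\<Sum>r<4. \<Sum>s<4. \<Sum>p<4. \<Sum>q<4. eps_mix g a b p q * eps_mix g c d r s * X p q r s)"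
    by (rule arg_cong[where f="\<lambda>z. 1/4 * z"], rule sum.cong[OF refl], rule sum_pull_out_2)
  also have "\<dots> = hodge g (left_dual g X a b) c d"
    unfolding hodge_def left_dual_def by (simp add: sum_distrib_left mult_ac)
  finally show ?thesis .
qed

lemma hodge_first_pair: "hodge g (\<lambda>a b. X a b c d) = (\<lambda>a b. left_dual g X a b c d)"
  by (simp add: left_dual_def hodge_def fun_eq_iff)

lemma hodge_second_pair: "hodge g (X a b) = right_dual g X a b"
  by (simp add: right_dual_def hodge_def fun_eq_iff)

lemma frakA_eq: "frakA g X t x = electric (\<lambda>c d. electric (\<lambda>a b. X a b c d) t x) t"
  unfolding frakA_def contr_eq_electric ..

lemma frakB_eq: "frakB g X t x = magnetic g (\<lambda>c d. electric (\<lambda>a b. X a b c d) t x) t"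
  unfolding frakB_def magnetic_def contr_eq_electric hodge_electric hodge_second_pair ..

lemma frakC_eq: "frakC g X t x = electric (\<lambda>c d. magnetic g (\<lambda>a b. X a b c d) t x) t"
  unfolding frakC_def magnetic_def contr_eq_electric electric_uminus hodge_first_pair ..

lemma frakD_eq: "frakD g X t x = magnetic g (\<lambda>c d. magnetic g (\<lambda>a b. X a b c d) t x) t"
  unfolding frakD_def magnetic_def contr_eq_electric hodge_first_pair hodge_uminus hodge_electric
    electric_uminus double_dual_eq_hodge by simp

lemma skew_electric:
  assumes "\<And>b. b < 4 \<Longrightarrow> skew (X x b)"
  shows "skew (\<lambda>c d. electric (\<lambda>a b. X a b c d) t x)"
proof (unfold skew_def, intro allI impI)
  fix c d :: nat assume "c < 4" "d < 4"
  then have "X x b c d = - X x b d c" if "b < 4" for b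
    using assms[OF that] unfolding skew_def by blast
  then show "electric (\<lambda>a b. X a b c d) t x = - electric (\<lambda>a b. X a b d c) t x"
    unfolding electric_def sum_negf[symmetric] by (intro sum.cong) simp_all
qed

lemma skew_magnetic:
  assumes "\<And>a b. a < 4 \<Longrightarrow> b < 4 \<Longrightarrow> skew (X a b)"
  shows "skew (\<lambda>c d. magnetic g (\<lambda>a b. X a b c d) t x)"
proof (unfold skew_def, intro allI impI)
  fix c d :: nat assume "c < 4" "d < 4"
  then have "X a b c d = - X a b d c" if "a < 4" "b < 4" for a b
    using assms[OF that] unfolding skew_def by blast
  then have "hodge g (\<lambda>a b. X a b c d) = (\<lambda>a b. - hodge g (\<lambda>a b. X a b d c) a b)"
    unfolding hodge_def by (simp add: fun_eq_iff sum_negf[symmetric])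
  then show "magnetic g (\<lambda>a b. X a b c d) t x = - magnetic g (\<lambda>a b. X a b d c) t x"
    unfolding magnetic_def by (simp add: electric_uminus)
qed

theorem mainTheorem6:
  fixes g :: "nat \<Rightarrow> nat \<Rightarrow> real"
    and X :: "nat \<Rightarrow> nat \<Rightarrow> nat \<Rightarrow> nat \<Rightarrow> real"
    and t :: "nat \<Rightarrow> real"
  assumes "lorentzian g"
    and "\<And>a b c d. a < 4 \<Longrightarrow> b < 4 \<Longrightarrow> c < 4 \<Longrightarrow> d < 4 \<Longrightarrow> X a b c d = - X b a c d"
    and "\<And>a b c d. a < 4 \<Longrightarrow> b < 4 \<Longrightarrow> c < 4 \<Longrightarrow> d < 4 \<Longrightarrow> X a b c d = - X a b d c"
    and "sqnorm g t \<noteq> 0"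
    and "a < 4" "b < 4" "c < 4" "d < 4"
  shows "X a b c d =
    (\<Sum>p<4. \<Sum>q<4. \<Sum>r<4. \<Sum>s<4.
       (g4 g a b p q * (g4 g c d r s * raise2 g (frakA g X t) p r
                        + eps_low g c d r s * raise2 g (frakB g X t) p r)
        + eps_low g a b p q * (g4 g c d r s * raise2 g (frakC g X t) p r
                        + eps_low g c d r s * raise2 g (frakD g X t) p r))
       * t q * t s) / (sqnorm g t)^2"
proof -
  let ?n = "sqnorm g t"
  have skew_cd: "skew (X a' b')" if "a' < 4" "b' < 4" for a' b'
    using assms(3) that unfolding skew_def by blast
  have skew_ab: "skew (\<lambda>a b. X a b c d)"
    using assms(2,7,8) unfolding skew_def by blast
  have "(\<Sum>p<4. \<Sum>q<4. \<Sum>r<4. \<Sum>s<4.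
       (g4 g a b p q * (g4 g c d r s * raise2 g (frakA g X t) p r
                        + eps_low g c d r s * raise2 g (frakB g X t) p r)
        + eps_low g a b p q * (g4 g c d r s * raise2 g (frakC g X t) p r
                        + eps_low g c d r s * raise2 g (frakD g X t) p r))
       * t q * t s)
    = em_form g t (\<lambda>x. em_form g t (frakA g X t x) (frakB g X t x) c d)
                  (\<lambda>x. em_form g t (frakC g X t x) (frakD g X t x) c d) a b"
    by (rule em_form_em_form[symmetric])
  also have "\<dots> = em_form g t (\<lambda>x. ?n * electric (\<lambda>a b. X a b c d) t x)
                               (\<lambda>x. ?n * magnetic g (\<lambda>a b. X a b c d) t x) a b"
    using assms(1,7,8) skew_cd
    by (intro em_form_cong) (simp_all add: frakA_eq frakB_eq frakC_eq frakD_eq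
        two_form_decomposition skew_electric skew_magnetic)
  also have "\<dots> = ?n * (?n * X a b c d)"
    using two_form_decomposition[OF assms(1) skew_ab assms(5,6)] by (simp add: em_form_scale)
  finally show ?thesis
    using assms(4) by (simp add: power2_eq_square)
qed

end
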